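(* Let $X_1,\ldots,X_k\in\mathbf{M}_{2N}(\mathbb{C})$ commute pairwise and be self-dual ($X_j^\sharp=X_j$). Then there is a single symplectic unitary $U$ such that for all $j$, \[U^{*}X_jU=\begin{bmatrix}T_j&C_j\\0&T_j^{\mathrm T}\end{bmatrix}\] with each $T_j$ upper-triangular and each $C_j$ skew-symmetric ($N\times N$ blocks).
   Context: For $X\in\mathbf{M}_{2N}(\mathbb{C})$ in $N\times N$ blocks $X=\begin{bmatrix}A&B\\C&D\end{bmatrix}$, $X^{\sharp}=\begin{bmatrix}D^{\mathrm T}&-B^{\mathrm T}\\-C^{\mathrm T}&A^{\mathrm T}\end{bmatrix}$, equivalently $X^\sharp=-ZX^{\mathrm T}Z$ with $Z=\begin{bmatrix}0&I\\-I&0\end{bmatrix}$. A symplectic unitary is a unitary $U\in\mathbf{M}_{2N}(\mathbb{C})$ with $U^{\mathrm T}ZU=Z$. *)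

theory Defs
  imports "Jordan_Normal_Form.Schur_Decomposition"
begin

definition Zmat :: "nat \<Rightarrow> complex mat" where
  "Zmat N = four_block_mat (0\<^sub>m N N) (1\<^sub>m N) (- 1\<^sub>m N) (0\<^sub>m N N)"

definition sharp :: "nat \<Rightarrow> complex mat \<Rightarrow> complex mat" where
  "sharp N X = - (Zmat N * transpose_mat X * Zmat N)"

definition unitary_mat :: "nat \<Rightarrow> complex mat \<Rightarrow> bool" where
  "unitary_mat n U \<longleftrightarrow> U \<in> carrier_mat n n \<and> mat_adjoint U * U = 1\<^sub>m n"

definition symplectic_unitary :: "nat \<Rightarrow> complex mat \<Rightarrow> bool" where
  "symplectic_unitary N U \<longleftrightarrow> unitary_mat (2 * N) U \<and>
     transpose_mat U * Zmat N * U = Zmat N"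

end

theory Submission
  imports Defs
begin

text \<open>Construct, one vector at a time, an orthonormal family u_0, ..., u_{N-1} that is isotropic
  for the symplectic form x^T Z y and such that every X_j maps u_i into the span of u_0, ..., u_i.
  Given u_0, ..., u_{b-1} with b < N, the symplectic complement W of their span V strictly contains V,
  and self-duality (Z X_j = X_j^T Z) makes W invariant under every X_j. Commuting matrices have a
  common eigenvector modulo V in W, and a Gram-Schmidt step turns it into u_b. The unitary U with
  columns u_i and J u_i = Z^T conj(u_i) is symplectic; in U^* X_j U the lower left block vanishes by
  isotropy, the upper left block is triangular by the flag property, and the skew-symmetry of the
  upper right block and the transposed lower right block come from moving X_j across the
  symplectic form.\<close>

section \<open>Linear combinations and subspaces\<close>

definition lin_subspace :: "nat \<Rightarrow> complex vec set \<Rightarrow> bool" where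
  "lin_subspace n S \<longleftrightarrow> S \<subseteq> carrier_vec n \<and> 0\<^sub>v n \<in> S \<and> (\<forall>x\<in>S. \<forall>y\<in>S. x + y \<in> S)
     \<and> (\<forall>a. \<forall>x\<in>S. a \<cdot>\<^sub>v x \<in> S)"

lemma lin_subspace_diff:
  assumes "lin_subspace n S" "x \<in> S" "y \<in> S"
  shows "x - y \<in> S"
proof -
  have "x \<in> carrier_vec n" "y \<in> carrier_vec n" using assms unfolding lin_subspace_def by auto
  then have "x - y = x + (-1) \<cdot>\<^sub>v y" by (intro eq_vecI) auto
  then show ?thesis using assms unfolding lin_subspace_def by auto
qed

definition lincomb_vec :: "nat \<Rightarrow> (nat \<Rightarrow> complex vec) \<Rightarrow> nat \<Rightarrow> (nat \<Rightarrow> complex) \<Rightarrow> complex vec" where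
  "lincomb_vec n w m c = vec n (\<lambda>r. \<Sum>i<m. c i * w i $ r)"

definition lin_span :: "nat \<Rightarrow> (nat \<Rightarrow> complex vec) \<Rightarrow> nat \<Rightarrow> complex vec set" where
  "lin_span n w m = range (lincomb_vec n w m)"

lemma lincomb_vec_carrier [simp]: "lincomb_vec n w m c \<in> carrier_vec n"
  and lincomb_vec_dim [simp]: "dim_vec (lincomb_vec n w m c) = n"
  and lincomb_vec_index [simp]: "r < n \<Longrightarrow> lincomb_vec n w m c $ r = (\<Sum>i<m. c i * w i $ r)"
  unfolding lincomb_vec_def by auto

lemma lincomb_vec_cong: "(\<And>i. i < m \<Longrightarrow> w i = w' i) \<Longrightarrow> lincomb_vec n w m c = lincomb_vec n w' m c"
  by (intro eq_vecI) auto

lemma lincomb_vec_add: "lincomb_vec n w m c + lincomb_vec n w m d = lincomb_vec n w m (\<lambda>i. c i + d i)"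
  by (intro eq_vecI) (auto simp: sum.distrib algebra_simps)

lemma lincomb_vec_smult: "a \<cdot>\<^sub>v lincomb_vec n w m c = lincomb_vec n w m (\<lambda>i. a * c i)"
  by (intro eq_vecI) (auto simp: sum_distrib_left algebra_simps)

lemma lincomb_vec_Suc_shift:
  "w 0 \<in> carrier_vec n \<Longrightarrow>
   lincomb_vec n w (Suc m) c = c 0 \<cdot>\<^sub>v w 0 + lincomb_vec n (\<lambda>i. w (Suc i)) m (\<lambda>i. c (Suc i))"
  by (intro eq_vecI) (auto simp del: sum.lessThan_Suc simp: sum.lessThan_Suc_shift)

lemma mult_mat_vec_lincomb:
  assumes A: "A \<in> carrier_mat n n" and w: "\<forall>i<m. w i \<in> carrier_vec n"
  shows "A *\<^sub>v lincomb_vec n w m c = lincomb_vec n (\<lambda>i. A *\<^sub>v w i) m c"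
proof (intro eq_vecI)
  fix r assume "r < dim_vec (lincomb_vec n (\<lambda>i. A *\<^sub>v w i) m c)"
  then have r: "r < n" by simp
  have "(A *\<^sub>v lincomb_vec n w m c) $ r = (\<Sum>s<n. A $$ (r, s) * (\<Sum>i<m. c i * w i $ s))"
    using A r unfolding mult_mat_vec_def scalar_prod_def by (simp add: lessThan_atLeast0)
  also have "\<dots> = (\<Sum>i<m. c i * (\<Sum>s<n. A $$ (r, s) * w i $ s))"
    by (simp add: sum_distrib_left mult.left_commute sum.swap[of _ "{..<n}"])
  also have "\<dots> = (\<Sum>i<m. c i * (A *\<^sub>v w i) $ r)"
    using A r w unfolding mult_mat_vec_def scalar_prod_def
    by (intro sum.cong) (auto simp: lessThan_atLeast0)
  finally show "(A *\<^sub>v lincomb_vec n w m c) $ r = lincomb_vec n (\<lambda>i. A *\<^sub>v w i) m c $ r"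
    using r by simp
qed (use A in simp)

lemma lincomb_vec_lincomb_vec:
  assumes "\<forall>i<m. w i = lincomb_vec n u b (d i)"
  shows "lincomb_vec n w m c = lincomb_vec n u b (\<lambda>l. \<Sum>i<m. c i * d i l)"
proof (intro eq_vecI)
  fix r assume "r < dim_vec (lincomb_vec n u b (\<lambda>l. \<Sum>i<m. c i * d i l))"
  then have r: "r < n" by simp
  have "lincomb_vec n w m c $ r = (\<Sum>i<m. c i * (\<Sum>l<b. d i l * u l $ r))"
    using r assms by (auto intro!: sum.cong)
  also have "\<dots> = (\<Sum>l<b. (\<Sum>i<m. c i * d i l) * u l $ r)"
    by (simp add: sum_distrib_left sum_distrib_right mult.assoc sum.swap[of _ "{..<m}"])
  finally show "lincomb_vec n w m c $ r = lincomb_vec n u b (\<lambda>l. \<Sum>i<m. c i * d i l) $ r"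
    using r by simp
qed simp

lemma lin_span_subspace: "lin_subspace n (lin_span n w m)"
  unfolding lin_subspace_def lin_span_def
proof (intro conjI ballI allI)
  show "0\<^sub>v n \<in> range (lincomb_vec n w m)"
    by (rule range_eqI[of _ _ "\<lambda>i. 0"]) (intro eq_vecI, auto)
qed (auto simp: lincomb_vec_add lincomb_vec_smult)

lemma lin_span_mono:
  assumes "m \<le> m'" shows "lin_span n w m \<subseteq> lin_span n w m'"
proof
  fix x assume "x \<in> lin_span n w m"
  then obtain c where x: "x = lincomb_vec n w m c" unfolding lin_span_def by blast
  have "(\<Sum>i<m'. (if i < m then c i else 0) * w i $ r) = (\<Sum>i<m. (if i < m then c i else 0) * w i $ r)" for r
    using assms by (intro sum.mono_neutral_right) auto
  then have "x = lincomb_vec n w m' (\<lambda>i. if i < m then c i else 0)"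
    unfolding x by (intro eq_vecI) auto
  then show "x \<in> lin_span n w m'" unfolding lin_span_def by blast
qed

lemma lin_span_invariant:
  assumes A: "A \<in> carrier_mat n n" and w: "\<forall>i<m. w i \<in> carrier_vec n"
    and Aw: "\<forall>i<m. A *\<^sub>v w i \<in> lin_span n w m" and x: "x \<in> lin_span n w m"
  shows "A *\<^sub>v x \<in> lin_span n w m"
proof -
  obtain c where c: "x = lincomb_vec n w m c" using x unfolding lin_span_def by blast
  have "\<forall>i. \<exists>d. i < m \<longrightarrow> A *\<^sub>v w i = lincomb_vec n w m d"
    using Aw unfolding lin_span_def by blast
  then obtain d where d: "\<forall>i<m. A *\<^sub>v w i = lincomb_vec n w m (d i)" by metis
  have "A *\<^sub>v x = lincomb_vec n (\<lambda>i. A *\<^sub>v w i) m c" unfolding c by (rule mult_mat_vec_lincomb[OF A w])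
  also have "\<dots> = lincomb_vec n w m (\<lambda>l. \<Sum>i<m. c i * d i l)" by (rule lincomb_vec_lincomb_vec[OF d])
  finally show ?thesis unfolding lin_span_def by blast
qed

section \<open>Eigenvectors modulo an invariant subspace\<close>

text \<open>Horner evaluation of p(A) y, with the coefficient list of p stored lowest degree first.\<close>
fun poly_act_coeffs :: "complex mat \<Rightarrow> complex list \<Rightarrow> complex vec \<Rightarrow> complex vec" where
  "poly_act_coeffs A [] y = 0\<^sub>v (dim_vec y)"
| "poly_act_coeffs A (a # as) y = a \<cdot>\<^sub>v y + A *\<^sub>v poly_act_coeffs A as y"

definition poly_act :: "complex mat \<Rightarrow> complex poly \<Rightarrow> complex vec \<Rightarrow> complex vec" where
  "poly_act A p y = poly_act_coeffs A (coeffs p) y"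

lemma poly_act_carrier: "A \<in> carrier_mat n n \<Longrightarrow> y \<in> carrier_vec n \<Longrightarrow> poly_act A p y \<in> carrier_vec n"
proof -
  assume "A \<in> carrier_mat n n" "y \<in> carrier_vec n"
  then have "poly_act_coeffs A as y \<in> carrier_vec n" for as by (induction as) auto
  then show ?thesis unfolding poly_act_def .
qed

lemma poly_act_0: "y \<in> carrier_vec n \<Longrightarrow> poly_act A 0 y = 0\<^sub>v n"
  unfolding poly_act_def by auto

lemma poly_act_pCons:
  assumes A: "A \<in> carrier_mat n n" and y: "y \<in> carrier_vec n"
  shows "poly_act A (pCons a p) y = a \<cdot>\<^sub>v y + A *\<^sub>v poly_act A p y"
proof (cases "a = 0 \<and> p = 0")
  case True
  then show ?thesis using A y unfolding poly_act_def by (intro eq_vecI) auto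
next
  case False
  then have "coeffs (pCons a p) = a # coeffs p" by (auto simp: coeffs_pCons_eq_cCons cCons_def)
  then show ?thesis unfolding poly_act_def by simp
qed

lemma poly_act_add:
  assumes A: "A \<in> carrier_mat n n" and y: "y \<in> carrier_vec n"
  shows "poly_act A (p + q) y = poly_act A p y + poly_act A q y"
proof (induction p arbitrary: q rule: pCons_induct)
  case 0
  then show ?case using poly_act_carrier[OF A y] by (simp add: poly_act_0[OF y])
next
  case (pCons a p)
  obtain b q' where q: "q = pCons b q'" by (cases q) auto
  have "poly_act A (pCons a p + q) y = (a + b) \<cdot>\<^sub>v y + A *\<^sub>v (poly_act A p y + poly_act A q' y)"
    using q poly_act_pCons[OF A y] pCons.IH by simp
  also have "\<dots> = (a \<cdot>\<^sub>v y + A *\<^sub>v poly_act A p y) + (b \<cdot>\<^sub>v y + A *\<^sub>v poly_act A q' y)"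
    using poly_act_carrier[OF A y] A y
    by (subst mult_add_distrib_mat_vec[of _ n n]) (auto intro!: eq_vecI simp: algebra_simps)
  finally show ?case using poly_act_pCons[OF A y] q by simp
qed

lemma poly_act_smult:
  assumes A: "A \<in> carrier_mat n n" and y: "y \<in> carrier_vec n"
  shows "poly_act A (smult c p) y = c \<cdot>\<^sub>v poly_act A p y"
proof (induction p rule: pCons_induct)
  case 0
  then show ?case using y by (auto intro!: eq_vecI simp: poly_act_0)
next
  case (pCons a p)
  have "poly_act A (smult c (pCons a p)) y = (c * a) \<cdot>\<^sub>v y + A *\<^sub>v (c \<cdot>\<^sub>v poly_act A p y)"
    using poly_act_pCons[OF A y] pCons.IH by simp
  also have "\<dots> = c \<cdot>\<^sub>v (a \<cdot>\<^sub>v y + A *\<^sub>v poly_act A p y)"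
    using poly_act_carrier[OF A y] A y
    by (subst mult_mat_vec[of _ n n]) (auto intro!: eq_vecI simp: algebra_simps)
  finally show ?case using poly_act_pCons[OF A y] by simp
qed

lemma poly_act_1:
  assumes A: "A \<in> carrier_mat n n" and y: "y \<in> carrier_vec n"
  shows "poly_act A 1 y = y"
  using poly_act_pCons[OF A y, of 1 0] poly_act_0[OF y] A y by (auto intro!: eq_vecI simp: one_pCons)

lemma poly_act_linear_factor:
  assumes A: "A \<in> carrier_mat n n" and y: "y \<in> carrier_vec n"
  shows "poly_act A ([:-\<mu>, 1:] * p) y = A *\<^sub>v poly_act A p y - \<mu> \<cdot>\<^sub>v poly_act A p y"
proof -
  have "[:-\<mu>, 1:] * p = smult (-\<mu>) p + pCons 0 p" by (simp add: mult_pCons_left)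
  then have "poly_act A ([:-\<mu>, 1:] * p) y = (-\<mu>) \<cdot>\<^sub>v poly_act A p y + (0 \<cdot>\<^sub>v y + A *\<^sub>v poly_act A p y)"
    by (simp only: poly_act_add[OF A y] poly_act_smult[OF A y] poly_act_pCons[OF A y])
  also have "\<dots> = A *\<^sub>v poly_act A p y - \<mu> \<cdot>\<^sub>v poly_act A p y"
    using poly_act_carrier[OF A y, of p] A y by (intro eq_vecI) auto
  finally show ?thesis .
qed

lemma poly_act_closed:
  assumes A: "A \<in> carrier_mat n n" and W: "lin_subspace n W" and inv: "\<forall>x\<in>W. A *\<^sub>v x \<in> W"
    and y: "y \<in> W"
  shows "poly_act A p y \<in> W"
proof (induction p rule: pCons_induct)
  case 0
  then show ?case using W y poly_act_0[of y n] unfolding lin_subspace_def by auto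
next
  case (pCons a p)
  have yc: "y \<in> carrier_vec n" using W y by (auto simp: lin_subspace_def)
  have "a \<cdot>\<^sub>v y + A *\<^sub>v poly_act A p y \<in> W" using W y inv pCons.IH unfolding lin_subspace_def by blast
  then show ?case using poly_act_pCons[OF A yc] by simp
qed

primrec mat_pow_vec :: "complex mat \<Rightarrow> nat \<Rightarrow> complex vec \<Rightarrow> complex vec" where
  "mat_pow_vec A 0 y = y"
| "mat_pow_vec A (Suc i) y = A *\<^sub>v mat_pow_vec A i y"

lemma mat_pow_vec_carrier:
  "A \<in> carrier_mat n n \<Longrightarrow> y \<in> carrier_vec n \<Longrightarrow> mat_pow_vec A i y \<in> carrier_vec n"
  by (induction i) auto

lemma poly_act_eq_lincomb_vec:
  assumes A: "A \<in> carrier_mat n n" and y: "y \<in> carrier_vec n"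
  shows "\<forall>i\<ge>m. coeff p i = 0 \<Longrightarrow> poly_act A p y = lincomb_vec n (\<lambda>i. mat_pow_vec A i y) m (coeff p)"
proof (induction p arbitrary: m rule: pCons_induct)
  case 0
  then show ?case by (intro eq_vecI) (simp_all add: poly_act_0[OF y])
next
  case (pCons a p)
  have "m \<noteq> 0"
  proof
    assume "m = 0"
    then have "pCons a p = 0" using pCons.prems by (simp add: poly_eq_iff)
    then show False using pCons.hyps by simp
  qed
  then obtain m' where m: "m = Suc m'" by (cases m) auto
  have "\<forall>i\<ge>m'. coeff p i = 0" using pCons.prems m by (metis Suc_le_mono coeff_pCons_Suc)
  then have IH: "poly_act A p y = lincomb_vec n (\<lambda>i. mat_pow_vec A i y) m' (coeff p)"
    by (rule pCons.IH)
  have "poly_act A (pCons a p) y = a \<cdot>\<^sub>v y + lincomb_vec n (\<lambda>i. A *\<^sub>v mat_pow_vec A i y) m' (coeff p)"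
    using poly_act_pCons[OF A y] IH mult_mat_vec_lincomb[OF A] mat_pow_vec_carrier[OF A y] by simp
  also have "\<dots> = lincomb_vec n (\<lambda>i. mat_pow_vec A i y) m (coeff (pCons a p))"
    using lincomb_vec_Suc_shift[of "\<lambda>i. mat_pow_vec A i y" n m' "coeff (pCons a p)"] y m by simp
  finally show ?case .
qed

text \<open>The vectors y, A y, ..., A^n y are linearly dependent: a vanishing determinant provides the coefficients.\<close>
lemma exists_annihilating_poly:
  assumes A: "A \<in> carrier_mat n n" and y: "y \<in> carrier_vec n"
  shows "\<exists>p. p \<noteq> 0 \<and> poly_act A p y = 0\<^sub>v n"
proof -
  define K where "K = mat\<^sub>r (Suc n) (Suc n)
    (\<lambda>i. if i = n then 0\<^sub>v (Suc n) else vec (Suc n) (\<lambda>l. mat_pow_vec A l y $ i))"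
  have Kc: "K \<in> carrier_mat (Suc n) (Suc n)" unfolding K_def by simp
  have "det K = 0" unfolding K_def by (rule det_row_0) auto
  then obtain v where v: "v \<in> carrier_vec (Suc n)" "v \<noteq> 0\<^sub>v (Suc n)" "K *\<^sub>v v = 0\<^sub>v (Suc n)"
    using det_0_iff_vec_prod_zero_field[OF Kc] by blast
  define p where "p = (\<Sum>i<Suc n. monom (v $ i) i)"
  have cp: "coeff p i = (if i < Suc n then v $ i else 0)" for i
    unfolding p_def by (simp add: coeff_sum coeff_monom)
  have "p \<noteq> 0"
  proof
    assume "p = 0"
    then have "v = 0\<^sub>v (Suc n)" using v(1) cp by (intro eq_vecI) (auto, metis coeff_0)
    then show False using v(2) by simp
  qed
  moreover have "poly_act A p y = 0\<^sub>v n"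
  proof (rule eq_vecI)
    fix r assume "r < dim_vec (0\<^sub>v n :: complex vec)"
    then have r: "r < n" by simp
    have "poly_act A p y $ r = (\<Sum>i<Suc n. coeff p i * mat_pow_vec A i y $ r)"
      using poly_act_eq_lincomb_vec[OF A y, of "Suc n" p] cp r by simp
    also have "\<dots> = (K *\<^sub>v v) $ r"
      using Kc v(1) r unfolding mult_mat_vec_def scalar_prod_def
      by (auto simp: lessThan_atLeast0 cp K_def intro!: sum.cong)
    finally show "poly_act A p y $ r = 0\<^sub>v n $ r" using v(3) r by simp
  qed (use poly_act_carrier[OF A y] in simp)
  ultimately show ?thesis by blast
qed

text \<open>Factor an annihilating polynomial of y into linear factors (fundamental theorem of algebra);
  the first partial product that maps y into V yields an eigenvector modulo V.\<close>
lemma exists_eigenvector_mod: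
  assumes A: "A \<in> carrier_mat n n" and V: "lin_subspace n V" and W: "lin_subspace n W"
    and iW: "\<forall>x\<in>W. A *\<^sub>v x \<in> W" and y: "y \<in> W" and yV: "y \<notin> V"
  shows "\<exists>\<mu> z. z \<in> W \<and> z \<notin> V \<and> A *\<^sub>v z - \<mu> \<cdot>\<^sub>v z \<in> V"
proof -
  have Wc: "W \<subseteq> carrier_vec n" using W unfolding lin_subspace_def by blast
  have chain: "\<forall>y\<in>W. poly_act A (\<Prod>a\<leftarrow>as. [:-a, 1:]) y \<in> V \<longrightarrow>
      y \<in> V \<or> (\<exists>\<mu> z. z \<in> W \<and> z \<notin> V \<and> A *\<^sub>v z - \<mu> \<cdot>\<^sub>v z \<in> V)" for as
  proof (induction as)
    case Nil
    show ?case using poly_act_1[OF A] Wc by auto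
  next
    case (Cons a as)
    show ?case
    proof (intro ballI impI)
      fix y assume yW: "y \<in> W" and h: "poly_act A (\<Prod>a\<leftarrow>a # as. [:-a, 1:]) y \<in> V"
      let ?z = "poly_act A (\<Prod>a\<leftarrow>as. [:-a, 1:]) y"
      have "?z \<in> W" by (rule poly_act_closed[OF A W iW yW])
      moreover have "A *\<^sub>v ?z - a \<cdot>\<^sub>v ?z \<in> V"
        using h poly_act_linear_factor[OF A, of y a] yW Wc by auto
      ultimately show "y \<in> V \<or> (\<exists>\<mu> z. z \<in> W \<and> z \<notin> V \<and> A *\<^sub>v z - \<mu> \<cdot>\<^sub>v z \<in> V)"
        using Cons.IH yW by blast
    qed
  qed
  have yc: "y \<in> carrier_vec n" using y Wc by blast
  obtain p where p: "p \<noteq> 0" "poly_act A p y = 0\<^sub>v n" using exists_annihilating_poly[OF A yc] by blast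
  obtain as where as: "smult (lead_coeff p) (\<Prod>a\<leftarrow>as. [:-a, 1:]) = p"
    using fundamental_theorem_algebra_factorized[of p] by blast
  let ?z = "poly_act A (\<Prod>a\<leftarrow>as. [:-a, 1:]) y"
  have "lead_coeff p \<cdot>\<^sub>v ?z = 0\<^sub>v n"
    using poly_act_smult[OF A yc, of "lead_coeff p" "\<Prod>a\<leftarrow>as. [:-a, 1:]"] as p(2) by simp
  then have "?z = 0\<^sub>v n"
    using p(1) poly_act_carrier[OF A yc, of "\<Prod>a\<leftarrow>as. [:-a, 1:]"]
    by (intro eq_vecI) (auto simp: vec_eq_iff)
  then have "?z \<in> V" using V unfolding lin_subspace_def by simp
  then show ?thesis using chain[of as] y yV by blast
qed

lemma eigen_mod_subspace:
  assumes A: "A \<in> carrier_mat n n" and V: "lin_subspace n V" and W: "lin_subspace n W"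
  shows "lin_subspace n {x \<in> W. A *\<^sub>v x - \<mu> \<cdot>\<^sub>v x \<in> V}"
proof -
  have Wc: "W \<subseteq> carrier_vec n" using W unfolding lin_subspace_def by blast
  have add: "A *\<^sub>v (x + y) - \<mu> \<cdot>\<^sub>v (x + y) = (A *\<^sub>v x - \<mu> \<cdot>\<^sub>v x) + (A *\<^sub>v y - \<mu> \<cdot>\<^sub>v y)"
    if "x \<in> carrier_vec n" "y \<in> carrier_vec n" for x y
    using that A by (subst mult_add_distrib_mat_vec[OF A that]) (auto intro!: eq_vecI simp: algebra_simps)
  have smult: "A *\<^sub>v (a \<cdot>\<^sub>v x) - \<mu> \<cdot>\<^sub>v (a \<cdot>\<^sub>v x) = a \<cdot>\<^sub>v (A *\<^sub>v x - \<mu> \<cdot>\<^sub>v x)"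
    if "x \<in> carrier_vec n" for x a
    using that A by (subst mult_mat_vec[OF A that]) (auto intro!: eq_vecI simp: algebra_simps)
  have zero: "A *\<^sub>v 0\<^sub>v n - \<mu> \<cdot>\<^sub>v 0\<^sub>v n = 0\<^sub>v n" using A by (auto intro!: eq_vecI)
  show ?thesis
    unfolding lin_subspace_def
  proof (intro conjI ballI allI)
    fix x y assume x: "x \<in> {x \<in> W. A *\<^sub>v x - \<mu> \<cdot>\<^sub>v x \<in> V}"
      and y: "y \<in> {x \<in> W. A *\<^sub>v x - \<mu> \<cdot>\<^sub>v x \<in> V}"
    then have "x \<in> carrier_vec n" "y \<in> carrier_vec n" using Wc by auto
    then show "x + y \<in> {x \<in> W. A *\<^sub>v x - \<mu> \<cdot>\<^sub>v x \<in> V}"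
      using x y add V W unfolding lin_subspace_def by auto
  next
    fix a x assume x: "x \<in> {x \<in> W. A *\<^sub>v x - \<mu> \<cdot>\<^sub>v x \<in> V}"
    then have "x \<in> carrier_vec n" using Wc by auto
    then show "a \<cdot>\<^sub>v x \<in> {x \<in> W. A *\<^sub>v x - \<mu> \<cdot>\<^sub>v x \<in> V}"
      using x smult V W unfolding lin_subspace_def by auto
  qed (use zero V W Wc in \<open>auto simp: lin_subspace_def\<close>)
qed

lemma eigen_mod_invariant:
  fixes A B :: "complex mat"
  assumes A: "A \<in> carrier_mat n n" and B: "B \<in> carrier_mat n n" and AB: "A * B = B * A"
    and Wc: "W \<subseteq> carrier_vec n" and iV: "\<forall>x\<in>V. B *\<^sub>v x \<in> V" and iW: "\<forall>x\<in>W. B *\<^sub>v x \<in> W"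
    and x: "x \<in> W" and ex: "A *\<^sub>v x - \<mu> \<cdot>\<^sub>v x \<in> V"
  shows "B *\<^sub>v x \<in> W \<and> A *\<^sub>v (B *\<^sub>v x) - \<mu> \<cdot>\<^sub>v (B *\<^sub>v x) \<in> V"
proof -
  have xc: "x \<in> carrier_vec n" using x Wc by blast
  have "A *\<^sub>v (B *\<^sub>v x) = (A * B) *\<^sub>v x" using A B xc by simp
  also have "\<dots> = B *\<^sub>v (A *\<^sub>v x)" unfolding AB using A B xc by simp
  finally have "A *\<^sub>v (B *\<^sub>v x) - \<mu> \<cdot>\<^sub>v (B *\<^sub>v x) = B *\<^sub>v (A *\<^sub>v x - \<mu> \<cdot>\<^sub>v x)"
    using A B xc by (simp add: mult_minus_distrib_mat_vec[OF B] mult_mat_vec[OF B xc])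
  then show ?thesis using iV iW x ex by simp
qed

text \<open>Induction on the number of matrices: the vectors of W that are eigenvectors of the last
  matrix modulo V form a subspace that the other, commuting matrices leave invariant.\<close>
lemma exists_common_eigenvector_mod:
  fixes A :: "nat \<Rightarrow> complex mat"
  assumes "\<forall>j<k. A j \<in> carrier_mat n n" and "\<forall>i<k. \<forall>j<k. A i * A j = A j * A i"
    and "lin_subspace n V" and "\<forall>j<k. \<forall>x\<in>V. A j *\<^sub>v x \<in> V"
    and "lin_subspace n W" and "V \<subseteq> W" and "\<forall>j<k. \<forall>x\<in>W. A j *\<^sub>v x \<in> W"
    and "y \<in> W" and "y \<notin> V"
  shows "\<exists>x\<in>W. x \<notin> V \<and> (\<forall>j<k. \<exists>\<mu>. A j *\<^sub>v x - \<mu> \<cdot>\<^sub>v x \<in> V)"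
  using assms
proof (induction k arbitrary: W y)
  case 0
  then show ?case by blast
next
  case (Suc k)
  note dims = Suc.prems(1) and comm = Suc.prems(2) and V = Suc.prems(3) and iV = Suc.prems(4)
    and W = Suc.prems(5) and VW = Suc.prems(6) and iW = Suc.prems(7)
  have Ak: "A k \<in> carrier_mat n n" using dims by simp
  obtain \<mu> z where z: "z \<in> W" "z \<notin> V" "A k *\<^sub>v z - \<mu> \<cdot>\<^sub>v z \<in> V"
    using exists_eigenvector_mod[OF Ak V W] iW Suc.prems(8,9) by blast
  define W1 where "W1 = {x \<in> W. A k *\<^sub>v x - \<mu> \<cdot>\<^sub>v x \<in> V}"
  have W1: "lin_subspace n W1" unfolding W1_def by (rule eigen_mod_subspace[OF Ak V W])
  have VW1: "V \<subseteq> W1"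
  proof
    fix x assume x: "x \<in> V"
    have "A k *\<^sub>v x - \<mu> \<cdot>\<^sub>v x \<in> V"
      using lin_subspace_diff[OF V] iV x V unfolding lin_subspace_def by simp
    then show "x \<in> W1" unfolding W1_def using x VW by blast
  qed
  have iW1: "\<forall>j<k. \<forall>x\<in>W1. A j *\<^sub>v x \<in> W1"
  proof (intro allI impI ballI)
    fix j x assume j: "j < k" and x: "x \<in> W1"
    have Aj: "A j \<in> carrier_mat n n" using dims j by simp
    have AkAj: "A k * A j = A j * A k" using comm j by simp
    have Wc: "W \<subseteq> carrier_vec n" using W unfolding lin_subspace_def by blast
    have "\<forall>y\<in>V. A j *\<^sub>v y \<in> V" "\<forall>y\<in>W. A j *\<^sub>v y \<in> W" using iV iW j by simp_all
    then show "A j *\<^sub>v x \<in> W1"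
      using eigen_mod_invariant[OF Ak Aj AkAj Wc] x unfolding W1_def by blast
  qed
  have zW1: "z \<in> W1" unfolding W1_def using z by blast
  have dims': "\<forall>j<k. A j \<in> carrier_mat n n" and comm': "\<forall>i<k. \<forall>j<k. A i * A j = A j * A i"
    and iV': "\<forall>j<k. \<forall>x\<in>V. A j *\<^sub>v x \<in> V"
    using dims comm iV by (meson less_SucI)+
  obtain x where x: "x \<in> W1" "x \<notin> V" "\<forall>j<k. \<exists>\<mu>. A j *\<^sub>v x - \<mu> \<cdot>\<^sub>v x \<in> V"
    using Suc.IH[OF dims' comm' V iV' W1 VW1 iW1 zW1 z(2)] by blast
  have "\<forall>j<Suc k. \<exists>\<mu>. A j *\<^sub>v x - \<mu> \<cdot>\<^sub>v x \<in> V"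
    using x(1,3) unfolding W1_def by (auto simp: less_Suc_eq)
  moreover have "x \<in> W" using x(1) unfolding W1_def by blast
  ultimately show ?case using x(2) by blast
qed

section \<open>The Hermitian and symplectic forms\<close>

definition cinner :: "nat \<Rightarrow> complex vec \<Rightarrow> complex vec \<Rightarrow> complex" where
  "cinner n x y = (\<Sum>r<n. cnj (x $ r) * y $ r)"

text \<open>The bilinear form x^T Z y preserved by symplectic matrices.\<close>
definition symp_form :: "nat \<Rightarrow> complex vec \<Rightarrow> complex vec \<Rightarrow> complex" where
  "symp_form N x y = (\<Sum>i<N. x $ i * y $ (N + i) - x $ (N + i) * y $ i)"

text \<open>The antiunitary J x = Z^T conj(x).\<close>
definition jconj :: "nat \<Rightarrow> complex vec \<Rightarrow> complex vec" where
  "jconj N x = vec (2 * N) (\<lambda>i. if i < N then - cnj (x $ (N + i)) else cnj (x $ (i - N)))"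

lemma sum_lessThan_double:
  fixes f :: "nat \<Rightarrow> 'a::comm_monoid_add"
  shows "(\<Sum>i<2 * N. f i) = (\<Sum>i<N. f i) + (\<Sum>i<N. f (N + i))"
proof -
  have "{..<2 * N} = {..<N} \<union> {N..<N + N}" by auto
  then have "(\<Sum>i<2 * N. f i) = (\<Sum>i<N. f i) + (\<Sum>i\<in>{N..<N + N}. f i)"
    by (simp add: sum.union_disjoint ivl_disj_int)
  also have "(\<Sum>i\<in>{N..<N + N}. f i) = (\<Sum>i<N. f (N + i))"
    using sum.shift_bounds_nat_ivl[of f 0 N N] by (simp add: lessThan_atLeast0 add.commute)
  finally show ?thesis .
qed

lemma cinner_lincomb_vec: "cinner n x (lincomb_vec n w m c) = (\<Sum>i<m. c i * cinner n x (w i))"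
  unfolding cinner_def by (simp add: sum_distrib_left mult.left_commute sum.swap[of _ "{..<n}"])

lemma symp_form_lincomb_vec_right:
  "symp_form N x (lincomb_vec (2 * N) w m c) = (\<Sum>i<m. c i * symp_form N x (w i))"
  unfolding symp_form_def
  by (simp add: sum_distrib_left algebra_simps sum_subtractf sum.swap[of _ "{..<N}"])

lemma symp_form_lincomb_vec_left:
  "symp_form N (lincomb_vec (2 * N) w m c) y = (\<Sum>i<m. c i * symp_form N (w i) y)"
  unfolding symp_form_def
  by (simp add: sum_distrib_left sum_distrib_right algebra_simps sum_subtractf sum.swap[of _ "{..<N}"])

lemma cinner_cnj_commute: "cinner n x y = cnj (cinner n y x)"
  unfolding cinner_def by (simp add: mult.commute)

lemma symp_form_antisym: "symp_form N x y = - symp_form N y x"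
  unfolding symp_form_def by (simp add: sum_negf[symmetric] algebra_simps)

lemma symp_form_self [simp]: "symp_form N x x = 0"
  using symp_form_antisym[of N x x] by simp

lemma cinner_diff_right:
  "x \<in> carrier_vec n \<Longrightarrow> y \<in> carrier_vec n \<Longrightarrow> cinner n a (x - y) = cinner n a x - cinner n a y"
  unfolding cinner_def by (simp add: sum_subtractf algebra_simps)

lemma cinner_smult_right: "x \<in> carrier_vec n \<Longrightarrow> cinner n a (c \<cdot>\<^sub>v x) = c * cinner n a x"
  unfolding cinner_def by (simp add: sum_distrib_left algebra_simps)

lemma cinner_smult_left: "x \<in> carrier_vec n \<Longrightarrow> cinner n (c \<cdot>\<^sub>v x) y = cnj c * cinner n x y"
  unfolding cinner_def by (simp add: sum_distrib_left algebra_simps)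

lemma symp_form_add_right:
  "x \<in> carrier_vec (2 * N) \<Longrightarrow> y \<in> carrier_vec (2 * N) \<Longrightarrow>
   symp_form N a (x + y) = symp_form N a x + symp_form N a y"
  unfolding symp_form_def by (simp add: sum.distrib algebra_simps sum_subtractf)

lemma symp_form_smult_right:
  "x \<in> carrier_vec (2 * N) \<Longrightarrow> symp_form N a (c \<cdot>\<^sub>v x) = c * symp_form N a x"
  unfolding symp_form_def by (simp add: sum_distrib_left algebra_simps sum_subtractf)

lemma symp_form_zero_right [simp]: "symp_form N a (0\<^sub>v (2 * N)) = 0"
  unfolding symp_form_def by simp

lemma cinner_self_pos:
  assumes x: "x \<in> carrier_vec n" and nz: "x \<noteq> 0\<^sub>v n"
  shows "\<exists>S > 0. cinner n x x = complex_of_real S"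
proof -
  let ?S = "\<Sum>r<n. (cmod (x $ r))\<^sup>2"
  have "cnj z * z = complex_of_real ((cmod z)\<^sup>2)" for z
    by (metis complex_norm_square mult.commute)
  then have "cinner n x x = complex_of_real ?S"
    unfolding cinner_def of_real_sum by (intro sum.cong) (auto simp only:)
  moreover have "?S > 0"
  proof -
    obtain r where "r < n" "x $ r \<noteq> 0" using x nz by (metis eq_vecI carrier_vecD index_zero_vec)
    then show ?thesis by (intro sum_pos2[of _ r]) auto
  qed
  ultimately show ?thesis by blast
qed

lemma jconj_carrier [simp]: "jconj N x \<in> carrier_vec (2 * N)"
  and jconj_dim [simp]: "dim_vec (jconj N x) = 2 * N"
  and jconj_index_low: "i < N \<Longrightarrow> jconj N x $ i = - cnj (x $ (N + i))"
  and jconj_index_high: "i < N \<Longrightarrow> jconj N x $ (N + i) = cnj (x $ i)"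
  and jconj_index_high': "i < N \<Longrightarrow> jconj N x $ (i + N) = cnj (x $ i)"
  unfolding jconj_def by auto

lemmas jconj_index = jconj_index_low jconj_index_high jconj_index_high'

lemma cinner_jconj_jconj: "cinner (2 * N) (jconj N x) (jconj N y) = cnj (cinner (2 * N) x y)"
  unfolding cinner_def sum_lessThan_double by (simp add: jconj_index algebra_simps)

lemma cinner_jconj_right: "cinner (2 * N) x (jconj N y) = - cnj (symp_form N x y)"
  unfolding cinner_def symp_form_def sum_lessThan_double
  by (simp add: jconj_index algebra_simps sum_subtractf sum_negf)

lemma cinner_jconj_left: "cinner (2 * N) (jconj N y) x = symp_form N y x"
  using cinner_jconj_right[of N x y] cinner_cnj_commute[of "2 * N" "jconj N y" x]
    symp_form_antisym[of N x y] by simp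

lemma symp_form_jconj_jconj: "symp_form N (jconj N x) (jconj N y) = cnj (symp_form N x y)"
  unfolding symp_form_def by (simp add: jconj_index algebra_simps sum_subtractf)

lemma symp_form_jconj_right: "symp_form N x (jconj N y) = cinner (2 * N) y x"
  unfolding cinner_def symp_form_def sum_lessThan_double
  by (simp add: jconj_index algebra_simps sum.distrib)

lemma cinner_eq_symp_form_jconj: "cinner (2 * N) x z = - symp_form N (jconj N x) z"
  unfolding cinner_def symp_form_def sum_lessThan_double
  by (simp add: jconj_index algebra_simps sum.distrib sum_negf sum_subtractf)

section \<open>The matrix Z and self-duality\<close>

lemma Zmat_carrier [simp]: "Zmat N \<in> carrier_mat (2 * N) (2 * N)"
  unfolding Zmat_def by (metis four_block_carrier_mat one_carrier_mat zero_carrier_mat mult_2)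

lemma Zmat_dim [simp]: "dim_row (Zmat N) = 2 * N" "dim_col (Zmat N) = 2 * N"
  using carrier_matD[OF Zmat_carrier] by auto

lemma Zmat_index:
  "r < 2 * N \<Longrightarrow> c < 2 * N \<Longrightarrow>
   Zmat N $$ (r, c) = (if r < N then (if c = N + r then 1 else 0) else (if c = r - N then -1 else 0))"
  unfolding Zmat_def four_block_mat_def Let_def by auto

lemma mult_mat_vec_index_sum:
  "A \<in> carrier_mat n m \<Longrightarrow> v \<in> carrier_vec m \<Longrightarrow> i < n \<Longrightarrow> (A *\<^sub>v v) $ i = (\<Sum>s<m. A $$ (i, s) * v $ s)"
  by (simp add: scalar_prod_def lessThan_atLeast0)

lemma Zmat_mult_vec_index:
  assumes y: "y \<in> carrier_vec (2 * N)" and r: "r < 2 * N"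
  shows "(Zmat N *\<^sub>v y) $ r = (if r < N then y $ (N + r) else - y $ (r - N))"
  using mult_mat_vec_index_sum[OF Zmat_carrier y r] r
  by (cases "r < N") (simp_all add: Zmat_index if_distrib[of "\<lambda>a. a * _"] sum.delta cong: if_cong)

lemma symp_form_eq_scalar_prod:
  assumes x: "x \<in> carrier_vec (2 * N)" and y: "y \<in> carrier_vec (2 * N)"
  shows "symp_form N x y = x \<bullet> (Zmat N *\<^sub>v y)"
proof -
  have "x \<bullet> (Zmat N *\<^sub>v y) = (\<Sum>r<2 * N. x $ r * (Zmat N *\<^sub>v y) $ r)"
    unfolding scalar_prod_def
    by (simp add: lessThan_atLeast0 del: index_mult_mat_vec)
  also have "\<dots> = (\<Sum>i<N. x $ i * y $ (N + i)) + (\<Sum>i<N. x $ (N + i) * - y $ i)"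
    unfolding sum_lessThan_double using y by (simp add: Zmat_mult_vec_index del: index_mult_mat_vec)
  also have "\<dots> = symp_form N x y"
    unfolding symp_form_def by (simp add: sum_subtractf sum_negf)
  finally show ?thesis by simp
qed

lemma selfdual_Zmat_mult_vec:
  assumes X: "X \<in> carrier_mat (2 * N) (2 * N)" and sd: "sharp N X = X" and y: "y \<in> carrier_vec (2 * N)"
  shows "Zmat N *\<^sub>v (X *\<^sub>v y) = transpose_mat X *\<^sub>v (Zmat N *\<^sub>v y)"
proof -
  define w where "w = transpose_mat X *\<^sub>v (Zmat N *\<^sub>v y)"
  have XT: "transpose_mat X \<in> carrier_mat (2 * N) (2 * N)" using X by simp
  have ZXT: "Zmat N * transpose_mat X \<in> carrier_mat (2 * N) (2 * N)"
    using mult_carrier_mat[OF Zmat_carrier XT] .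
  have Zy: "Zmat N *\<^sub>v y \<in> carrier_vec (2 * N)" using mult_mat_vec_carrier[OF Zmat_carrier y] .
  have w: "w \<in> carrier_vec (2 * N)" unfolding w_def using mult_mat_vec_carrier[OF XT Zy] .
  have "X *\<^sub>v y = sharp N X *\<^sub>v y" using sd by simp
  also have "\<dots> = - ((Zmat N * transpose_mat X * Zmat N) *\<^sub>v y)"
    unfolding sharp_def using ZXT y by (intro uminus_mult_mat_vec) simp
  also have "(Zmat N * transpose_mat X * Zmat N) *\<^sub>v y = Zmat N *\<^sub>v w"
    unfolding w_def using assoc_mult_mat_vec[OF ZXT Zmat_carrier y] assoc_mult_mat_vec[OF Zmat_carrier XT Zy]
    by simp
  finally have Xy: "X *\<^sub>v y = - (Zmat N *\<^sub>v w)" .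
  have Zw: "- (Zmat N *\<^sub>v w) \<in> carrier_vec (2 * N)" using mult_mat_vec_carrier[OF Zmat_carrier w] by simp
  have "(Zmat N *\<^sub>v (- (Zmat N *\<^sub>v w))) $ i = w $ i" if i: "i < 2 * N" for i
  proof -
    have "i - N < N" using i by arith
    then show ?thesis using Zmat_mult_vec_index[OF Zw i] Zmat_mult_vec_index[OF w] w i
      by (cases "i < N") (simp_all del: index_mult_mat_vec)
  qed
  then have "Zmat N *\<^sub>v (- (Zmat N *\<^sub>v w)) = w"
    using w by (intro eq_vecI) auto
  then show ?thesis unfolding Xy w_def .
qed

lemma symp_form_selfdual:
  assumes X: "X \<in> carrier_mat (2 * N) (2 * N)" and sd: "sharp N X = X"
    and x: "x \<in> carrier_vec (2 * N)" and y: "y \<in> carrier_vec (2 * N)"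
  shows "symp_form N x (X *\<^sub>v y) = symp_form N (X *\<^sub>v x) y"
proof -
  have Zy: "Zmat N *\<^sub>v y \<in> carrier_vec (2 * N)" using mult_mat_vec_carrier[OF Zmat_carrier y] .
  have "symp_form N x (X *\<^sub>v y) = x \<bullet> (transpose_mat X *\<^sub>v (Zmat N *\<^sub>v y))"
    using symp_form_eq_scalar_prod[OF x] selfdual_Zmat_mult_vec[OF X sd y] X y by simp
  also have "\<dots> = (Zmat N *\<^sub>v y) \<bullet> (X *\<^sub>v x)"
    using transpose_vec_mult_scalar[OF X x Zy] comm_scalar_prod[OF x, of "transpose_mat X *\<^sub>v (Zmat N *\<^sub>v y)"] X Zy
    by simp
  also have "\<dots> = symp_form N (X *\<^sub>v x) y"
    using symp_form_eq_scalar_prod[of "X *\<^sub>v x" N y] comm_scalar_prod[OF Zy, of "X *\<^sub>v x"] X x y by simp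
  finally show ?thesis .
qed

lemma cinner_selfdual_jconj_skew:
  assumes X: "X \<in> carrier_mat (2 * N) (2 * N)" and sd: "sharp N X = X"
  shows "cinner (2 * N) x (X *\<^sub>v jconj N y) = - cinner (2 * N) y (X *\<^sub>v jconj N x)"
proof -
  have "cinner (2 * N) x (X *\<^sub>v jconj N y) = - symp_form N (jconj N x) (X *\<^sub>v jconj N y)"
    by (rule cinner_eq_symp_form_jconj)
  also have "\<dots> = - symp_form N (X *\<^sub>v jconj N x) (jconj N y)"
    using symp_form_selfdual[OF X sd jconj_carrier jconj_carrier] by simp
  also have "\<dots> = - cinner (2 * N) y (X *\<^sub>v jconj N x)"
    by (simp add: symp_form_jconj_right)
  finally show ?thesis .
qed

lemma symp_form_selfdual_jconj:
  assumes X: "X \<in> carrier_mat (2 * N) (2 * N)" and sd: "sharp N X = X" and x: "x \<in> carrier_vec (2 * N)"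
  shows "symp_form N x (X *\<^sub>v jconj N y) = cinner (2 * N) y (X *\<^sub>v x)"
  using symp_form_selfdual[OF X sd x jconj_carrier] by (simp add: symp_form_jconj_right)

lemma mat_adjoint_carrier: "U \<in> carrier_mat n m \<Longrightarrow> mat_adjoint U \<in> carrier_mat m n"
  unfolding mat_adjoint_def by auto

lemma mat_adjoint_index:
  "U \<in> carrier_mat n m \<Longrightarrow> i < m \<Longrightarrow> j < n \<Longrightarrow> mat_adjoint U $$ (i, j) = cnj (U $$ (j, i))"
  unfolding mat_adjoint_def mat_of_rows_def by (auto simp: conjugate_complex_def)

lemma mat_adjoint_mult_index:
  assumes U: "U \<in> carrier_mat n n" and X: "X \<in> carrier_mat n n" and a: "a < n" and b: "b < n"
  shows "(mat_adjoint U * X * U) $$ (a, b) = cinner n (col U a) (X *\<^sub>v col U b)"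
proof -
  have AU: "mat_adjoint U \<in> carrier_mat n n" by (rule mat_adjoint_carrier[OF U])
  have "(mat_adjoint U * X * U) $$ (a, b) = row (mat_adjoint U) a \<bullet> col (X * U) b"
    using AU X U a b by (simp add: assoc_mult_mat[OF AU X U])
  also have "\<dots> = cinner n (col U a) (X *\<^sub>v col U b)"
    unfolding cinner_def scalar_prod_def using AU U X a b
    by (auto simp: mat_adjoint_index lessThan_atLeast0 intro!: sum.cong)
  finally show ?thesis .
qed

lemma mat_adjoint_self_mult_index:
  assumes U: "U \<in> carrier_mat n n" and a: "a < n" and b: "b < n"
  shows "(mat_adjoint U * U) $$ (a, b) = cinner n (col U a) (col U b)"
  using mat_adjoint_mult_index[OF U one_carrier_mat a b] U mat_adjoint_carrier[OF U] b by simp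

lemma transpose_Zmat_mult_index:
  assumes U: "U \<in> carrier_mat (2 * N) (2 * N)" and a: "a < 2 * N" and b: "b < 2 * N"
  shows "(transpose_mat U * Zmat N * U) $$ (a, b) = symp_form N (col U a) (col U b)"
proof -
  have UT: "transpose_mat U \<in> carrier_mat (2 * N) (2 * N)" using U by simp
  have "(transpose_mat U * Zmat N * U) $$ (a, b) = row (transpose_mat U) a \<bullet> col (Zmat N * U) b"
    using U a b by (simp add: assoc_mult_mat[OF UT Zmat_carrier U])
  also have "\<dots> = col U a \<bullet> (Zmat N *\<^sub>v col U b)" using U a b col_mult2[OF Zmat_carrier U b] by simp
  also have "\<dots> = symp_form N (col U a) (col U b)"
    using U a b by (simp add: symp_form_eq_scalar_prod)
  finally show ?thesis .
qed

section \<open>Isotropic orthonormal flags\<close>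

definition symplectic_orthonormal :: "nat \<Rightarrow> (nat \<Rightarrow> complex vec) \<Rightarrow> nat \<Rightarrow> bool" where
  "symplectic_orthonormal N u b \<longleftrightarrow> (\<forall>i<b. u i \<in> carrier_vec (2 * N)) \<and>
     (\<forall>i<b. \<forall>l<b. cinner (2 * N) (u i) (u l) = (if i = l then 1 else 0)) \<and>
     (\<forall>i<b. \<forall>l<b. symp_form N (u i) (u l) = 0)"

definition invariant_flag :: "nat \<Rightarrow> (nat \<Rightarrow> complex mat) \<Rightarrow> nat \<Rightarrow> (nat \<Rightarrow> complex vec) \<Rightarrow> nat \<Rightarrow> bool" where
  "invariant_flag N X k u b \<longleftrightarrow> symplectic_orthonormal N u b \<and>
     (\<forall>j<k. \<forall>i<b. X j *\<^sub>v u i \<in> lin_span (2 * N) u (Suc i))"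

definition symp_compl :: "nat \<Rightarrow> (nat \<Rightarrow> complex vec) \<Rightarrow> nat \<Rightarrow> complex vec set" where
  "symp_compl N u b = {x \<in> carrier_vec (2 * N). \<forall>i<b. symp_form N (u i) x = 0}"

lemma symp_compl_subspace: "lin_subspace (2 * N) (symp_compl N u b)"
  unfolding lin_subspace_def symp_compl_def by (auto simp: symp_form_add_right symp_form_smult_right)

lemma lin_span_subset_symp_compl:
  assumes "\<forall>i<b. \<forall>l<b. symp_form N (u i) (u l) = 0"
  shows "lin_span (2 * N) u b \<subseteq> symp_compl N u b"
  using assms unfolding lin_span_def symp_compl_def
  by (auto simp: symp_form_lincomb_vec_right intro!: sum.neutral)

lemma symp_compl_invariant:
  assumes X: "X \<in> carrier_mat (2 * N) (2 * N)" and sd: "sharp N X = X"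
    and u: "\<forall>i<b. u i \<in> carrier_vec (2 * N)" and Xu: "\<forall>i<b. X *\<^sub>v u i \<in> lin_span (2 * N) u b"
    and x: "x \<in> symp_compl N u b"
  shows "X *\<^sub>v x \<in> symp_compl N u b"
proof -
  have xc: "x \<in> carrier_vec (2 * N)" using x unfolding symp_compl_def by simp
  have "symp_form N (u i) (X *\<^sub>v x) = 0" if i: "i < b" for i
  proof -
    obtain d where d: "X *\<^sub>v u i = lincomb_vec (2 * N) u b d" using Xu i unfolding lin_span_def by blast
    have "symp_form N (u i) (X *\<^sub>v x) = symp_form N (X *\<^sub>v u i) x"
      using symp_form_selfdual[OF X sd _ xc] u i by simp
    also have "\<dots> = (\<Sum>l<b. d l * symp_form N (u l) x)" unfolding d by (rule symp_form_lincomb_vec_left)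
    also have "\<dots> = 0" using x unfolding symp_compl_def by (auto intro!: sum.neutral)
    finally show ?thesis .
  qed
  then show ?thesis unfolding symp_compl_def using mult_mat_vec_carrier[OF X xc] by blast
qed

lemma cinner_lincomb_vec_orthonormal:
  assumes "\<forall>i<b. \<forall>l<b. cinner n (u i) (u l) = (if i = l then 1 else 0)" and "l < b"
  shows "cinner n (u l) (lincomb_vec n u b c) = c l"
proof -
  have "cinner n (u l) (lincomb_vec n u b c) = (\<Sum>i<b. if i = l then c i else 0)"
    unfolding cinner_lincomb_vec using assms by (intro sum.cong) auto
  then show ?thesis using assms(2) by simp
qed

text \<open>The 2b < 2N linear conditions on y leave a nonzero solution.\<close>
lemma exists_orthogonal_vector:
  assumes bN: "b < N" and u: "\<forall>i<b. u i \<in> carrier_vec (2 * N)"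
  shows "\<exists>y. y \<in> carrier_vec (2 * N) \<and> y \<noteq> 0\<^sub>v (2 * N) \<and>
    (\<forall>i<b. cinner (2 * N) (u i) y = 0 \<and> symp_form N (u i) y = 0)"
proof -
  define rw where "rw r = (if r < b then vec (2 * N) (\<lambda>s. cnj (u r $ s))
     else if r < 2 * b then vec (2 * N) (\<lambda>s. if s < N then - u (r - b) $ (N + s) else u (r - b) $ (s - N))
     else 0\<^sub>v (2 * N))" for r
  define K where "K = mat\<^sub>r (2 * N) (2 * N) (\<lambda>r. if r = 2 * b then 0\<^sub>v (2 * N) else rw r)"
  have Kc: "K \<in> carrier_mat (2 * N) (2 * N)" unfolding K_def by simp
  have "det K = 0" unfolding K_def using bN by (intro det_row_0) (auto simp: rw_def)
  then obtain y where y: "y \<in> carrier_vec (2 * N)" "y \<noteq> 0\<^sub>v (2 * N)" "K *\<^sub>v y = 0\<^sub>v (2 * N)"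
    using det_0_iff_vec_prod_zero_field[OF Kc] by blast
  have "cinner (2 * N) (u i) y = 0 \<and> symp_form N (u i) y = 0" if i: "i < b" for i
  proof
    have "0 = (K *\<^sub>v y) $ i" using y(3) i bN by simp
    also have "\<dots> = (\<Sum>s<2 * N. K $$ (i, s) * y $ s)"
      using mult_mat_vec_index_sum[OF Kc y(1)] i bN by simp
    also have "\<dots> = cinner (2 * N) (u i) y"
      unfolding cinner_def using i bN by (intro sum.cong) (auto simp: K_def rw_def)
    finally show "cinner (2 * N) (u i) y = 0" by simp
  next
    have "0 = (K *\<^sub>v y) $ (b + i)" using y(3) i bN by simp
    also have "\<dots> = (\<Sum>s<2 * N. K $$ (b + i, s) * y $ s)"
      using mult_mat_vec_index_sum[OF Kc y(1)] i bN by simp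
    also have "\<dots> = (\<Sum>s<2 * N. (if s < N then - u i $ (N + s) else u i $ (s - N)) * y $ s)"
      using i bN by (intro sum.cong) (auto simp: K_def rw_def)
    also have "\<dots> = symp_form N (u i) y"
      unfolding sum_lessThan_double symp_form_def by (simp add: sum_subtractf sum_negf algebra_simps)
    finally show "symp_form N (u i) y = 0" by simp
  qed
  then show ?thesis using y by blast
qed

lemma exists_vector_outside_span:
  assumes bN: "b < N" and u: "symplectic_orthonormal N u b"
  shows "\<exists>y\<in>symp_compl N u b. y \<notin> lin_span (2 * N) u b"
proof -
  obtain y where y: "y \<in> carrier_vec (2 * N)" "y \<noteq> 0\<^sub>v (2 * N)"
    "\<forall>i<b. cinner (2 * N) (u i) y = 0 \<and> symp_form N (u i) y = 0"
    using exists_orthogonal_vector[OF bN] u unfolding symplectic_orthonormal_def by blast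
  have "y \<notin> lin_span (2 * N) u b"
  proof
    assume "y \<in> lin_span (2 * N) u b"
    then obtain c where c: "y = lincomb_vec (2 * N) u b c" unfolding lin_span_def by blast
    have "cinner (2 * N) y y = (\<Sum>i<b. c i * cnj (cinner (2 * N) (u i) y))"
      by (subst (2) c) (simp add: cinner_lincomb_vec cinner_cnj_commute[of _ y])
    also have "\<dots> = 0" using y(3) by simp
    finally show False using cinner_self_pos[OF y(1,2)] by auto
  qed
  moreover have "y \<in> symp_compl N u b" unfolding symp_compl_def using y by simp
  ultimately show ?thesis by blast
qed

text \<open>One Gram-Schmidt step: remove the orthogonal projection onto the span, then normalize.\<close>
lemma exists_normalized_residual:
  assumes u: "\<forall>i<b. u i \<in> carrier_vec n"
    and orth: "\<forall>i<b. \<forall>l<b. cinner n (u i) (u l) = (if i = l then 1 else 0)"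
    and x: "x \<in> carrier_vec n" and xV: "x \<notin> lin_span n u b"
  shows "\<exists>a p. p \<in> lin_span n u b \<and> (\<forall>l<b. cinner n (u l) (a \<cdot>\<^sub>v (x - p)) = 0) \<and>
    cinner n (a \<cdot>\<^sub>v (x - p)) (a \<cdot>\<^sub>v (x - p)) = 1"
proof -
  define p where "p = lincomb_vec n u b (\<lambda>i. cinner n (u i) x)"
  have pV: "p \<in> lin_span n u b" unfolding p_def lin_span_def by blast
  have pc: "p \<in> carrier_vec n" unfolding p_def by simp
  have xp: "x - p \<in> carrier_vec n" using x pc by simp
  have orth_xp: "cinner n (u l) (x - p) = 0" if l: "l < b" for l
  proof -
    have "cinner n (u l) p = cinner n (u l) x"
      unfolding p_def using cinner_lincomb_vec_orthonormal[OF orth l] by simp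
    then show ?thesis using cinner_diff_right[OF x pc] by simp
  qed
  have "x - p \<noteq> 0\<^sub>v n"
  proof
    assume xp0: "x - p = 0\<^sub>v n"
    have "x = p"
    proof (rule eq_vecI)
      fix i assume "i < dim_vec p"
      then show "x $ i = p $ i" using arg_cong[OF xp0, of "\<lambda>v. v $ i"] x pc by simp
    qed (use x pc in simp)
    then show False using xV pV by simp
  qed
  then obtain S where S: "S > 0" "cinner n (x - p) (x - p) = complex_of_real S"
    using cinner_self_pos[OF xp] by blast
  define a where "a = complex_of_real (1 / sqrt S)"
  have "cinner n (a \<cdot>\<^sub>v (x - p)) (a \<cdot>\<^sub>v (x - p)) = cnj a * (a * complex_of_real S)"
    by (simp add: cinner_smult_left[OF xp] cinner_smult_right[OF xp] S(2))
  also have "\<dots> = complex_of_real (1 / sqrt S * (1 / sqrt S * S))"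
    unfolding a_def by (simp only: complex_cnj_complex_of_real of_real_mult)
  also have "1 / sqrt S * (1 / sqrt S * S) = 1"
  proof -
    have "sqrt S * sqrt S = S" using S(1) by simp
    then show ?thesis using S(1) by (simp add: field_simps)
  qed
  finally have "cinner n (a \<cdot>\<^sub>v (x - p)) (a \<cdot>\<^sub>v (x - p)) = 1" by simp
  moreover have "\<forall>l<b. cinner n (u l) (a \<cdot>\<^sub>v (x - p)) = 0"
    using orth_xp cinner_smult_right[OF xp] by simp
  ultimately show ?thesis using pV by blast
qed

lemma eigen_mod_affine:
  assumes A: "A \<in> carrier_mat n n" and V: "lin_subspace n V" and iV: "\<forall>y\<in>V. A *\<^sub>v y \<in> V"
    and x: "x \<in> carrier_vec n" and ex: "A *\<^sub>v x - \<mu> \<cdot>\<^sub>v x \<in> V" and p: "p \<in> V"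
  shows "A *\<^sub>v (a \<cdot>\<^sub>v (x - p)) - \<mu> \<cdot>\<^sub>v (a \<cdot>\<^sub>v (x - p)) \<in> V"
proof -
  have pc: "p \<in> carrier_vec n" using V p unfolding lin_subspace_def by blast
  have "A *\<^sub>v p - \<mu> \<cdot>\<^sub>v p \<in> V"
    using lin_subspace_diff[OF V] iV p V unfolding lin_subspace_def by simp
  then have "a \<cdot>\<^sub>v ((A *\<^sub>v x - \<mu> \<cdot>\<^sub>v x) - (A *\<^sub>v p - \<mu> \<cdot>\<^sub>v p)) \<in> V"
    using lin_subspace_diff[OF V ex] V unfolding lin_subspace_def by blast
  moreover have "A *\<^sub>v (a \<cdot>\<^sub>v (x - p)) - \<mu> \<cdot>\<^sub>v (a \<cdot>\<^sub>v (x - p))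
      = a \<cdot>\<^sub>v ((A *\<^sub>v x - \<mu> \<cdot>\<^sub>v x) - (A *\<^sub>v p - \<mu> \<cdot>\<^sub>v p))"
    using A x pc
    by (simp add: mult_mat_vec[of A n n] mult_minus_distrib_mat_vec[OF A x pc])
      (intro eq_vecI, auto simp: algebra_simps)
  ultimately show ?thesis by simp
qed

lemma lin_span_cong: "(\<And>i. i < m \<Longrightarrow> w i = w' i) \<Longrightarrow> lin_span n w m = lin_span n w' m"
  unfolding lin_span_def using lincomb_vec_cong by (metis image_cong)

lemma invariant_flag_Suc:
  assumes dims: "\<forall>j<k. X j \<in> carrier_mat (2 * N) (2 * N)"
    and flag: "invariant_flag N X k u b" and v: "v \<in> carrier_vec (2 * N)"
    and unit: "cinner (2 * N) v v = 1" and orth: "\<forall>l<b. cinner (2 * N) (u l) v = 0"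
    and iso: "\<forall>l<b. symp_form N (u l) v = 0"
    and eig: "\<forall>j<k. \<exists>\<mu>. X j *\<^sub>v v - \<mu> \<cdot>\<^sub>v v \<in> lin_span (2 * N) u b"
  shows "invariant_flag N X k (u(b := v)) (Suc b)"
proof -
  have u: "symplectic_orthonormal N u b" and Xu: "\<forall>j<k. \<forall>i<b. X j *\<^sub>v u i \<in> lin_span (2 * N) u (Suc i)"
    using flag unfolding invariant_flag_def by auto
  have orth': "\<forall>l<b. cinner (2 * N) v (u l) = 0" using orth cinner_cnj_commute[of "2 * N" v] by simp
  have iso': "\<forall>l<b. symp_form N v (u l) = 0" using iso symp_form_antisym[of N v] by simp
  have "symplectic_orthonormal N (u(b := v)) (Suc b)"
    using u v unit orth orth' iso iso' unfolding symplectic_orthonormal_def by (auto simp: less_Suc_eq)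
  moreover have "X j *\<^sub>v (u(b := v)) i \<in> lin_span (2 * N) (u(b := v)) (Suc i)"
    if j: "j < k" and i: "i < Suc b" for j i
  proof (cases "i = b")
    case False
    then have "i < b" using i by simp
    then show ?thesis using Xu j lin_span_cong[of "Suc i" u "u(b := v)"] by auto
  next
    case True
    obtain \<mu> c where c: "X j *\<^sub>v v - \<mu> \<cdot>\<^sub>v v = lincomb_vec (2 * N) u b c"
      using eig j unfolding lin_span_def by blast
    have "X j *\<^sub>v v = lincomb_vec (2 * N) u b c + \<mu> \<cdot>\<^sub>v v"
      unfolding c[symmetric] using dims j v by (intro eq_vecI) auto
    also have "\<dots> = lincomb_vec (2 * N) (u(b := v)) (Suc b) (c(b := \<mu>))"
      using v by (intro eq_vecI) auto
    finally show ?thesis using True unfolding lin_span_def by auto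
  qed
  ultimately show ?thesis unfolding invariant_flag_def by blast
qed

text \<open>The flag is extended by a common eigenvector, modulo the current span V, of the
  matrices acting on the symplectic complement W of V; self-duality makes W invariant.\<close>
lemma invariant_flag_extend:
  assumes dims: "\<forall>j<k. X j \<in> carrier_mat (2 * N) (2 * N)"
    and comm: "\<forall>i<k. \<forall>j<k. X i * X j = X j * X i"
    and sd: "\<forall>j<k. sharp N (X j) = X j"
    and flag: "invariant_flag N X k u b" and bN: "b < N"
  shows "\<exists>v. invariant_flag N X k (u(b := v)) (Suc b)"
proof -
  let ?V = "lin_span (2 * N) u b" and ?W = "symp_compl N u b"
  have u: "symplectic_orthonormal N u b" and Xu: "\<forall>j<k. \<forall>i<b. X j *\<^sub>v u i \<in> lin_span (2 * N) u (Suc i)"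
    using flag unfolding invariant_flag_def by auto
  have uc: "\<forall>i<b. u i \<in> carrier_vec (2 * N)"
    and orth: "\<forall>i<b. \<forall>l<b. cinner (2 * N) (u i) (u l) = (if i = l then 1 else 0)"
    and iso: "\<forall>i<b. \<forall>l<b. symp_form N (u i) (u l) = 0"
    using u unfolding symplectic_orthonormal_def by auto
  have XuV: "\<forall>j<k. \<forall>i<b. X j *\<^sub>v u i \<in> ?V"
    using Xu lin_span_mono[of _ b] by (meson Suc_leI subsetD)
  have V: "lin_subspace (2 * N) ?V" by (rule lin_span_subspace)
  have W: "lin_subspace (2 * N) ?W" by (rule symp_compl_subspace)
  have VW: "?V \<subseteq> ?W" using lin_span_subset_symp_compl[OF iso] .
  have iV: "\<forall>j<k. \<forall>x\<in>?V. X j *\<^sub>v x \<in> ?V" using lin_span_invariant dims uc XuV by blast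
  have iW: "\<forall>j<k. \<forall>x\<in>?W. X j *\<^sub>v x \<in> ?W" using symp_compl_invariant dims sd uc XuV by blast
  obtain y where "y \<in> ?W" "y \<notin> ?V" using exists_vector_outside_span[OF bN u] by blast
  then obtain x where x: "x \<in> ?W" "x \<notin> ?V" and ex: "\<forall>j<k. \<exists>\<mu>. X j *\<^sub>v x - \<mu> \<cdot>\<^sub>v x \<in> ?V"
    using exists_common_eigenvector_mod[OF dims comm V iV W VW iW] by blast
  have xc: "x \<in> carrier_vec (2 * N)" using x(1) unfolding symp_compl_def by simp
  obtain a p where p: "p \<in> ?V" and orth_v: "\<forall>l<b. cinner (2 * N) (u l) (a \<cdot>\<^sub>v (x - p)) = 0"
    and unit: "cinner (2 * N) (a \<cdot>\<^sub>v (x - p)) (a \<cdot>\<^sub>v (x - p)) = 1"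
    using exists_normalized_residual[OF uc orth xc x(2)] by blast
  let ?v = "a \<cdot>\<^sub>v (x - p)"
  have "?v \<in> ?W" using lin_subspace_diff[OF W x(1)] p VW W unfolding lin_subspace_def by blast
  then have vc: "?v \<in> carrier_vec (2 * N)" and iso_v: "\<forall>l<b. symp_form N (u l) ?v = 0"
    unfolding symp_compl_def by auto
  have "\<forall>j<k. \<exists>\<mu>. X j *\<^sub>v ?v - \<mu> \<cdot>\<^sub>v ?v \<in> ?V"
  proof (intro allI impI)
    fix j assume j: "j < k"
    obtain \<mu> where "X j *\<^sub>v x - \<mu> \<cdot>\<^sub>v x \<in> ?V" using ex j by blast
    then have "X j *\<^sub>v ?v - \<mu> \<cdot>\<^sub>v ?v \<in> ?V"
      using eigen_mod_affine[OF _ V _ xc _ p] dims iV j by simp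
    then show "\<exists>\<mu>. X j *\<^sub>v ?v - \<mu> \<cdot>\<^sub>v ?v \<in> ?V" by blast
  qed
  then show ?thesis using invariant_flag_Suc[OF dims flag vc unit orth_v iso_v] by blast
qed

lemma exists_invariant_flag:
  assumes dims: "\<forall>j<k. X j \<in> carrier_mat (2 * N) (2 * N)"
    and comm: "\<forall>i<k. \<forall>j<k. X i * X j = X j * X i"
    and sd: "\<forall>j<k. sharp N (X j) = X j"
  shows "b \<le> N \<Longrightarrow> \<exists>u. invariant_flag N X k u b"
proof (induction b)
  case 0
  then show ?case unfolding invariant_flag_def symplectic_orthonormal_def by auto
next
  case (Suc b)
  then show ?case using invariant_flag_extend[OF dims comm sd] by (metis Suc_le_lessD less_imp_le)
qed

lemma invariant_flag_cinner_lower: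
  assumes flag: "invariant_flag N X k u m" and "j < k" "b < a" "a < m"
  shows "cinner (2 * N) (u a) (X j *\<^sub>v u b) = 0"
proof -
  have "b < m" using assms(3,4) by simp
  then obtain c where "X j *\<^sub>v u b = lincomb_vec (2 * N) u (Suc b) c"
    using flag assms(2) unfolding invariant_flag_def lin_span_def by blast
  then show ?thesis using flag assms(3,4)
    by (auto simp: cinner_lincomb_vec invariant_flag_def symplectic_orthonormal_def intro!: sum.neutral)
qed

lemma invariant_flag_symp_form:
  assumes flag: "invariant_flag N X k u m" and "j < k" "a < m" "b < m"
  shows "symp_form N (u a) (X j *\<^sub>v u b) = 0"
proof -
  obtain c where "X j *\<^sub>v u b = lincomb_vec (2 * N) u (Suc b) c"
    using flag assms(2,4) unfolding invariant_flag_def lin_span_def by blast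
  then show ?thesis using flag assms(3,4)
    by (auto simp: symp_form_lincomb_vec_right invariant_flag_def symplectic_orthonormal_def intro!: sum.neutral)
qed

section \<open>The symplectic unitary of a flag\<close>

definition flag_unitary :: "nat \<Rightarrow> (nat \<Rightarrow> complex vec) \<Rightarrow> complex mat" where
  "flag_unitary N u = mat (2 * N) (2 * N) (\<lambda>(r, c). (if c < N then u c else jconj N (u (c - N))) $ r)"

lemma flag_unitary_carrier: "flag_unitary N u \<in> carrier_mat (2 * N) (2 * N)"
  unfolding flag_unitary_def by simp

lemma col_flag_unitary:
  assumes "\<forall>i<N. u i \<in> carrier_vec (2 * N)" and "c < 2 * N"
  shows "col (flag_unitary N u) c = (if c < N then u c else jconj N (u (c - N)))"
  using assms unfolding flag_unitary_def by (intro eq_vecI) auto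

lemma flag_unitary_adjoint_mult:
  assumes u: "symplectic_orthonormal N u N"
  shows "mat_adjoint (flag_unitary N u) * flag_unitary N u = 1\<^sub>m (2 * N)"
proof -
  let ?U = "flag_unitary N u"
  have uc: "\<forall>i<N. u i \<in> carrier_vec (2 * N)"
    and orth: "\<forall>i<N. \<forall>l<N. cinner (2 * N) (u i) (u l) = (if i = l then 1 else 0)"
    and iso: "\<forall>i<N. \<forall>l<N. symp_form N (u i) (u l) = 0"
    using u unfolding symplectic_orthonormal_def by auto
  note U = flag_unitary_carrier[of N u] and col = col_flag_unitary[OF uc]
  show ?thesis
  proof (rule eq_matI)
    fix a b assume "a < dim_row (1\<^sub>m (2 * N) :: complex mat)" "b < dim_col (1\<^sub>m (2 * N) :: complex mat)"
    then have a: "a < 2 * N" and b: "b < 2 * N" by auto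
    have "cinner (2 * N) (col ?U a) (col ?U b) = (if a = b then 1 else 0)"
    proof (cases "a < N"; cases "b < N")
      assume "a < N" "b < N"
      then show ?thesis using orth col[OF a] col[OF b] by simp
    next
      assume "a < N" "\<not> b < N"
      then show ?thesis using iso b col[OF a] col[OF b] by (auto simp: cinner_jconj_right)
    next
      assume "\<not> a < N" "b < N"
      then show ?thesis using iso a col[OF a] col[OF b] by (auto simp: cinner_jconj_left)
    next
      assume "\<not> a < N" "\<not> b < N"
      then show ?thesis using orth a b col[OF a] col[OF b] by (auto simp: cinner_jconj_jconj)
    qed
    then show "(mat_adjoint ?U * ?U) $$ (a, b) = 1\<^sub>m (2 * N) $$ (a, b)"
      using mat_adjoint_self_mult_index[OF U a b] a b by simp
  qed (use U mat_adjoint_carrier[OF U] in auto)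
qed

lemma flag_unitary_symplectic:
  assumes u: "symplectic_orthonormal N u N"
  shows "transpose_mat (flag_unitary N u) * Zmat N * flag_unitary N u = Zmat N"
proof -
  let ?U = "flag_unitary N u"
  have uc: "\<forall>i<N. u i \<in> carrier_vec (2 * N)"
    and orth: "\<forall>i<N. \<forall>l<N. cinner (2 * N) (u i) (u l) = (if i = l then 1 else 0)"
    and iso: "\<forall>i<N. \<forall>l<N. symp_form N (u i) (u l) = 0"
    using u unfolding symplectic_orthonormal_def by auto
  note U = flag_unitary_carrier[of N u] and col = col_flag_unitary[OF uc]
  show ?thesis
  proof (rule eq_matI)
    fix a b assume "a < dim_row (Zmat N)" "b < dim_col (Zmat N)"
    then have a: "a < 2 * N" and b: "b < 2 * N" by auto
    have "symp_form N (col ?U a) (col ?U b) = Zmat N $$ (a, b)"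
    proof (cases "a < N"; cases "b < N")
      assume "a < N" "b < N"
      then show ?thesis using iso a b col[OF a] col[OF b] by (simp add: Zmat_index)
    next
      assume "a < N" "\<not> b < N"
      then show ?thesis using orth a b col[OF a] col[OF b] by (auto simp: symp_form_jconj_right Zmat_index)
    next
      assume "\<not> a < N" "b < N"
      then show ?thesis using orth a b col[OF a] col[OF b] symp_form_antisym[of N "jconj N (u (a - N))"]
        by (auto simp: symp_form_jconj_right Zmat_index)
    next
      assume "\<not> a < N" "\<not> b < N"
      then show ?thesis using iso a b col[OF a] col[OF b] by (auto simp: symp_form_jconj_jconj Zmat_index)
    qed
    then show "(transpose_mat ?U * Zmat N * ?U) $$ (a, b) = Zmat N $$ (a, b)"
      using transpose_Zmat_mult_index[OF U a b] by simp
  qed (use U in auto)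
qed

lemma symplectic_unitary_flag_unitary:
  "symplectic_orthonormal N u N \<Longrightarrow> symplectic_unitary N (flag_unitary N u)"
  unfolding symplectic_unitary_def unitary_mat_def
  using flag_unitary_carrier flag_unitary_adjoint_mult flag_unitary_symplectic by blast

lemma block_form_of_entries:
  assumes Y: "Y \<in> carrier_mat (2 * N) (2 * N)"
    and lower: "\<And>a b. b < a \<Longrightarrow> a < N \<Longrightarrow> Y $$ (a, b) = 0"
    and skew: "\<And>a b. a < N \<Longrightarrow> b < N \<Longrightarrow> Y $$ (a, N + b) = - Y $$ (b, N + a)"
    and zero: "\<And>a b. a < N \<Longrightarrow> b < N \<Longrightarrow> Y $$ (N + a, b) = 0"
    and transp: "\<And>a b. a < N \<Longrightarrow> b < N \<Longrightarrow> Y $$ (N + a, N + b) = Y $$ (b, a)"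
  shows "\<exists>T C. T \<in> carrier_mat N N \<and> C \<in> carrier_mat N N \<and>
    upper_triangular T \<and> transpose_mat C = - C \<and> Y = four_block_mat T C (0\<^sub>m N N) (transpose_mat T)"
proof (intro exI conjI)
  let ?T = "mat N N (\<lambda>(a, b). Y $$ (a, b))" and ?C = "mat N N (\<lambda>(a, b). Y $$ (a, N + b))"
  show "?T \<in> carrier_mat N N" "?C \<in> carrier_mat N N" by auto
  show "upper_triangular ?T" unfolding upper_triangular_def using lower by auto
  show "transpose_mat ?C = - ?C"
  proof (rule eq_matI)
    fix a b assume "a < dim_row (- ?C)" "b < dim_col (- ?C)"
    then show "transpose_mat ?C $$ (a, b) = (- ?C) $$ (a, b)" using skew[of b a] by simp
  qed auto
  show "Y = four_block_mat ?T ?C (0\<^sub>m N N) (transpose_mat ?T)"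
  proof (rule eq_matI)
    fix a b assume "a < dim_row (four_block_mat ?T ?C (0\<^sub>m N N) (transpose_mat ?T))"
      "b < dim_col (four_block_mat ?T ?C (0\<^sub>m N N) (transpose_mat ?T))"
    then have a: "a < 2 * N" and b: "b < 2 * N" by auto
    show "Y $$ (a, b) = four_block_mat ?T ?C (0\<^sub>m N N) (transpose_mat ?T) $$ (a, b)"
    proof (cases "a < N"; cases "b < N")
      assume "\<not> a < N" "b < N"
      then show ?thesis using zero[of "a - N" b] a by simp
    next
      assume "\<not> a < N" "\<not> b < N"
      then show ?thesis using transp[of "a - N" "b - N"] a b by simp
    qed (use b in simp_all)
  qed (use Y in auto)
qed

lemma flag_unitary_block_form:
  assumes flag: "invariant_flag N X k u N" and j: "j < k"
    and X: "X j \<in> carrier_mat (2 * N) (2 * N)" and sd: "sharp N (X j) = X j"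
  shows "\<exists>T C. T \<in> carrier_mat N N \<and> C \<in> carrier_mat N N \<and>
    upper_triangular T \<and> transpose_mat C = - C \<and>
    mat_adjoint (flag_unitary N u) * X j * flag_unitary N u = four_block_mat T C (0\<^sub>m N N) (transpose_mat T)"
proof -
  let ?U = "flag_unitary N u"
  let ?Y = "mat_adjoint ?U * X j * ?U"
  have uc: "\<forall>i<N. u i \<in> carrier_vec (2 * N)"
    using flag unfolding invariant_flag_def symplectic_orthonormal_def by auto
  note U = flag_unitary_carrier[of N u]
  have Y: "?Y $$ (a, b) = cinner (2 * N) (col ?U a) (X j *\<^sub>v col ?U b)" if "a < 2 * N" "b < 2 * N" for a b
    using mat_adjoint_mult_index[OF U X that] .
  have YL: "?Y $$ (a, b) = cinner (2 * N) (u a) (X j *\<^sub>v u b)"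
    and YR: "?Y $$ (a, N + b) = cinner (2 * N) (u a) (X j *\<^sub>v jconj N (u b))"
    and YLL: "?Y $$ (N + a, b) = symp_form N (u a) (X j *\<^sub>v u b)"
    and YLR: "?Y $$ (N + a, N + b) = symp_form N (u a) (X j *\<^sub>v jconj N (u b))"
    if "a < N" "b < N" for a b
    using that Y[of a b] Y[of a "N + b"] Y[of "N + a" b] Y[of "N + a" "N + b"]
    by (simp_all add: col_flag_unitary[OF uc] cinner_jconj_left)
  have "\<exists>T C. T \<in> carrier_mat N N \<and> C \<in> carrier_mat N N \<and> upper_triangular T \<and>
      transpose_mat C = - C \<and> ?Y = four_block_mat T C (0\<^sub>m N N) (transpose_mat T)"
  proof (rule block_form_of_entries)
    show "?Y \<in> carrier_mat (2 * N) (2 * N)" using mat_adjoint_carrier[OF U] X U by simp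
    show "?Y $$ (a, b) = 0" if "b < a" "a < N" for a b
      using YL[of a b] invariant_flag_cinner_lower[OF flag j that] that by simp
    show "?Y $$ (a, N + b) = - ?Y $$ (b, N + a)" if "a < N" "b < N" for a b
      using YR[of a b] YR[of b a] cinner_selfdual_jconj_skew[OF X sd, where x = "u a" and y = "u b"] that by simp
    show "?Y $$ (N + a, b) = 0" if "a < N" "b < N" for a b
      using YLL[of a b] invariant_flag_symp_form[OF flag j that] that by simp
    show "?Y $$ (N + a, N + b) = ?Y $$ (b, a)" if "a < N" "b < N" for a b
      using YLR[of a b] YL[of b a] symp_form_selfdual_jconj[OF X sd, where x = "u a" and y = "u b"] uc that by simp
  qed
  then show ?thesis by simp
qed

theorem mainTheorem10:
  fixes N k :: nat and X :: "nat \<Rightarrow> complex mat"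
  assumes dims: "\<forall>j<k. X j \<in> carrier_mat (2 * N) (2 * N)"
    and comm: "\<forall>i<k. \<forall>j<k. X i * X j = X j * X i"
    and selfdual: "\<forall>j<k. sharp N (X j) = X j"
  shows "\<exists>U. symplectic_unitary N U \<and>
           (\<forall>j<k. \<exists>T C. T \<in> carrier_mat N N \<and> C \<in> carrier_mat N N \<and>
              upper_triangular T \<and> transpose_mat C = - C \<and>
              mat_adjoint U * X j * U = four_block_mat T C (0\<^sub>m N N) (transpose_mat T))"
proof -
  obtain u where flag: "invariant_flag N X k u N" using exists_invariant_flag[OF dims comm selfdual] by blast
  then have "symplectic_unitary N (flag_unitary N u)"
    using symplectic_unitary_flag_unitary unfolding invariant_flag_def by blast
  moreover have "\<forall>j<k. \<exists>T C. T \<in> carrier_mat N N \<and> C \<in> carrier_mat N N \<and>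
      upper_triangular T \<and> transpose_mat C = - C \<and>
      mat_adjoint (flag_unitary N u) * X j * flag_unitary N u = four_block_mat T C (0\<^sub>m N N) (transpose_mat T)"
    using flag_unitary_block_form[OF flag] dims selfdual by blast
  ultimately show ?thesis by blast
qed

end
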